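(* Let $a,b$ be coprime positive integers with $ab\ne1$, let $X>0$ and let $u\ne1$ be positive. Then $$\operatorname{vol}(\mathcal{R}'(X))=\operatorname{vol}(\mathcal{R}(X))=\frac{X\operatorname{vol}(\mathcal{S}_{b/a})}{\sqrt{|a^2-b^2|}}.$$ Furthermore $$\mathcal{R}(X)\subseteq[-c\sqrt{X},c\sqrt{X}]\times\big(0,c\sqrt{X/|a^2-b^2|}\big],\qquad \mathcal{S}_u\subseteq[-c,c]\times(0,c],$$ for an absolute constant $c>0$.
   Context: For positive $u\ne1$ define the quadratic forms $p_u(s,t)=-2s^2-\frac{1-u^2}{|1-u^2|}t^2+\frac{4}{\sqrt{|1-u^2|}}st$, $q_u(s,t)=2s^2-\frac{1-u^2}{|1-u^2|}t^2$, $r_u(s,t)=2s^2-2\frac{1-u^2}{\sqrt{|1-u^2|}}st+\frac{1-u^2}{|1-u^2|}t^2$, and $\mathcal{S}_u=\{(s,t)\in\mathbb{R}\times\mathbb{R}_{>0}: 0<p_u(s,t)\le1,\ 0<q_u(s,t)\le1,\ r_u(s,t)>0\}$. With $Q_1(s,t)=2s^2+(a^2-b^2)t^2-4ast$, $Q_2(s,t)=-2s^2+(a^2-b^2)t^2$, $Q_3(s,t)=-2as^2+2(a^2-b^2)st-a(a^2-b^2)t^2$, define $\mathcal{R}(X)=\{(s,t)\in\mathbb{R}\times\mathbb{R}_{>0}: Q_3(s,t)<0,\ 0>Q_1(s,t)\ge -X,\ 0>Q_2(s,t)\ge -X\}$ and $\mathcal{R}'(X)=\{(s,t)\in\mathcal{R}(X):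 s(s-at)\ne0,\ s/t\ne(a^2-b^2)/(2a)\}$. *)

theory Defs
  imports "HOL-Analysis.Analysis"
begin

definition p_u :: "real \<Rightarrow> real \<Rightarrow> real \<Rightarrow> real" where
  "p_u u s t = - 2 * s^2 - ((1 - u^2) / \<bar>1 - u^2\<bar>) * t^2 + (4 / sqrt \<bar>1 - u^2\<bar>) * s * t"

definition q_u :: "real \<Rightarrow> real \<Rightarrow> real \<Rightarrow> real" where
  "q_u u s t = 2 * s^2 - ((1 - u^2) / \<bar>1 - u^2\<bar>) * t^2"

definition r_u :: "real \<Rightarrow> real \<Rightarrow> real \<Rightarrow> real" where
  "r_u u s t = 2 * s^2 - 2 * ((1 - u^2) / sqrt \<bar>1 - u^2\<bar>) * s * t
              + ((1 - u^2) / \<bar>1 - u^2\<bar>) * t^2"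

definition S_u :: "real \<Rightarrow> (real \<times> real) set" where
  "S_u u = {(s, t). t > 0 \<and> 0 < p_u u s t \<and> p_u u s t \<le> 1
                 \<and> 0 < q_u u s t \<and> q_u u s t \<le> 1 \<and> r_u u s t > 0}"

definition Q1 :: "real \<Rightarrow> real \<Rightarrow> real \<Rightarrow> real \<Rightarrow> real" where
  "Q1 a b s t = 2 * s^2 + (a^2 - b^2) * t^2 - 4 * a * s * t"

definition Q2 :: "real \<Rightarrow> real \<Rightarrow> real \<Rightarrow> real \<Rightarrow> real" where
  "Q2 a b s t = - 2 * s^2 + (a^2 - b^2) * t^2"

definition Q3 :: "real \<Rightarrow> real \<Rightarrow> real \<Rightarrow> real \<Rightarrow> real" where
  "Q3 a b s t = - 2 * a * s^2 + 2 * (a^2 - b^2) * s * t - a * (a^2 - b^2) * t^2"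

definition R_reg :: "real \<Rightarrow> real \<Rightarrow> real \<Rightarrow> (real \<times> real) set" where
  "R_reg a b X = {(s, t). t > 0 \<and> Q3 a b s t < 0
                    \<and> 0 > Q1 a b s t \<and> Q1 a b s t \<ge> - X
                    \<and> 0 > Q2 a b s t \<and> Q2 a b s t \<ge> - X}"

definition R_reg' :: "real \<Rightarrow> real \<Rightarrow> real \<Rightarrow> (real \<times> real) set" where
  "R_reg' a b X = {(s, t) \<in> R_reg a b X. s * (s - a * t) \<noteq> 0
                     \<and> s / t \<noteq> (a^2 - b^2) / (2 * a)}"

end

(* With u = b/a and D = |a^2 - b^2|, the substitution (s, t) \<mapsto> (sqrt X s, sqrt (X / D) t)
   turns Q1, Q2, Q3 into -X p_u, -X q_u and -a X r_u, so it maps S_u bijectively onto R(X)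
   and scales area by X / sqrt D.  R'(X) differs from R(X) by three lines through the
   origin, which are null sets.  S_u is bounded: for u > 1 the condition q_u \<le> 1 describes
   an ellipse, and for u < 1 the coefficient 4 / sqrt (1 - u^2) \<ge> 4 in p_u \<le> 1, combined
   with 0 < q_u \<le> 1, confines s and t; rescaling transfers the bound to R(X). *)

theory Submission
  imports Defs
begin

lemma borel_measurable_fst [measurable]:
  "fst \<in> borel_measurable (borel :: ('a::topological_space \<times> 'b::topological_space) measure)"
  by (intro borel_measurable_continuous_onI continuous_intros)

lemma borel_measurable_snd [measurable]:
  "snd \<in> borel_measurable (borel :: ('a::topological_space \<times> 'b::topological_space) measure)"
  by (intro borel_measurable_continuous_onI continuous_intros)

lemma emeasure_lborel_pair_scale:
  fixes A :: "(real \<times> real) set" and \<alpha> \<beta> :: real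
  assumes A: "A \<in> sets borel" and "\<alpha> \<noteq> 0" "\<beta> \<noteq> 0"
  shows "emeasure lborel A
    = ennreal (\<bar>\<alpha>\<bar> * \<bar>\<beta>\<bar>) * emeasure lborel ((\<lambda>(s, t). (\<alpha> * s, \<beta> * t)) -` A)"
proof -
  define T :: "real \<times> real \<Rightarrow> real \<times> real" where "T = (\<lambda>(s, t). (\<alpha> * s, \<beta> * t))"
  let ?c = "\<lambda>j::real \<times> real. if j = (1, 0) then \<alpha> else \<beta>"
  have "(\<lambda>x. 0 + (\<Sum>j\<in>Basis. (?c j * (x \<bullet> j)) *\<^sub>R j)) = T"
    by (auto simp: T_def Basis_prod_def inner_prod_def)
  moreover have "(\<Prod>j\<in>(Basis :: (real \<times> real) set). \<bar>?c j\<bar>) = \<bar>\<alpha>\<bar> * \<bar>\<beta>\<bar>"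
    by (simp add: Basis_prod_def)
  ultimately have "lborel = density (distr lborel borel T) (\<lambda>_. ennreal (\<bar>\<alpha>\<bar> * \<bar>\<beta>\<bar>))"
    using lborel_affine_euclidean[where c = ?c and t = 0] assms by auto
  then have "emeasure lborel A = emeasure (density (distr lborel borel T) (\<lambda>_. ennreal (\<bar>\<alpha>\<bar> * \<bar>\<beta>\<bar>))) A"
    by (rule arg_cong)
  also have "\<dots> = ennreal (\<bar>\<alpha>\<bar> * \<bar>\<beta>\<bar>) * emeasure lborel (T -` A)"
  proof -
    have [measurable]: "T \<in> borel_measurable borel"
      unfolding T_def split_beta' by measurable
    show ?thesis
      using A by (simp add: emeasure_density emeasure_distr nn_integral_cmult_indicator)
  qed
  finally show ?thesis unfolding T_def .
qed

lemma null_sets_lborel_line: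
  fixes c :: real
  shows "{x :: real \<times> real. fst x = c * snd x} \<in> null_sets lborel"
proof -
  have "{x :: real \<times> real. fst x = c * snd x} = {x. (1, - c) \<bullet> x = 0}"
    by (auto simp: inner_prod_def)
  moreover have "negligible {x :: real \<times> real. (1, - c) \<bullet> x = 0}"
    by (rule negligible_hyperplane) (simp add: zero_prod_def)
  moreover have "{x :: real \<times> real. fst x = c * snd x} \<in> sets lborel"
    by measurable
  ultimately show ?thesis
    by (metis negligible_iff_null_sets null_sets_completion_iff)
qed

(* The constraints defining S_u for u < 1, where k = 4 / sqrt (1 - u^2). *)
lemma S_u_bound_hyperbolic:
  fixes k s t :: real
  assumes k: "4 \<le> k" and t: "0 < t"
    and p_pos: "0 < - 2 * s^2 - t^2 + k * s * t" and p_le: "- 2 * s^2 - t^2 + k * s * t \<le> 1"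
    and q_pos: "0 < 2 * s^2 - t^2" and q_le: "2 * s^2 - t^2 \<le> 1"
  shows "0 < s \<and> s < 2 \<and> t < 2"
proof -
  have "0 \<le> 2 * s^2 + t^2"
    by simp
  then have "0 < k * s * t"
    using p_pos by linarith
  then have s: "0 < s"
    using k t by (simp add: zero_less_mult_iff)
  have "4 * s * t \<le> k * s * t"
    using k s t by simp
  then have st: "4 * s * t < 1 + 4 * s^2"
    using p_le q_pos by linarith
  have s2: "s^2 < 2"
  proof (rule ccontr)
    assume "\<not> s^2 < 2"
    then have "2 \<le> s^2" by simp
    have "16 * s^2 * t^2 < (1 + 4 * s^2)^2"
      using power_strict_mono[OF st, of 2] s t by (simp add: power_mult_distrib)
    moreover have "16 * s^2 * (2 * s^2 - 1) \<le> 16 * s^2 * t^2"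
      using q_le by (simp add: mult_left_mono)
    ultimately have "16 * (s^2)^2 < 24 * s^2 + 1"
      by (simp add: power2_eq_square algebra_simps)
    moreover have "32 * s^2 \<le> 16 * (s^2)^2"
      using mult_right_mono[OF \<open>2 \<le> s^2\<close>, of "s^2"] by (simp add: power2_eq_square)
    ultimately show False
      using \<open>2 \<le> s^2\<close> by linarith
  qed
  have "t^2 < 2^2" "s^2 < 2^2"
    using s2 q_pos by simp_all
  then show ?thesis
    using s t power2_less_imp_less[of s 2] power2_less_imp_less[of t 2] by simp
qed

lemma S_u_subset:
  fixes u :: real
  assumes "u^2 \<noteq> 1"
  shows "S_u u \<subseteq> {- 2 .. 2} \<times> {0 <.. 2}"
proof clarify
  fix s t assume st: "(s, t) \<in> S_u u"
  then have t: "0 < t" by (simp add: S_u_def)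
  show "s \<in> {- 2 .. 2} \<and> t \<in> {0 <.. 2}"
  proof (cases "u^2 < 1")
    case True
    then have sgn: "(1 - u^2) / \<bar>1 - u^2\<bar> = 1" by simp
    have "sqrt \<bar>1 - u^2\<bar> \<le> 1" "0 < sqrt \<bar>1 - u^2\<bar>"
      using True by auto
    then have "4 \<le> 4 / sqrt \<bar>1 - u^2\<bar>"
      by (simp add: le_divide_eq)
    then show ?thesis
      using S_u_bound_hyperbolic[of "4 / sqrt \<bar>1 - u^2\<bar>" t s] st t
      by (simp add: S_u_def p_u_def q_u_def sgn)
  next
    case False
    then have "1 - u^2 < 0"
      using assms by simp
    then have "(1 - u^2) / \<bar>1 - u^2\<bar> = - 1"
      by (simp add: divide_eq_minus_1_iff)
    then have "2 * s^2 + t^2 \<le> 1"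
      using st by (simp add: S_u_def q_u_def)
    then have "s^2 \<le> 1" "t^2 \<le> 1"
      using zero_le_power2[of s] zero_le_power2[of t] by linarith+
    then show ?thesis
      using t by (auto simp: abs_square_le_1 abs_le_iff)
  qed
qed

lemma R_reg_scaled_iff:
  fixes a b X s t :: real
  assumes a: "0 < a" and ab: "a^2 \<noteq> b^2" and X: "0 < X"
  shows "(sqrt X * s, sqrt X / sqrt \<bar>a^2 - b^2\<bar> * t) \<in> R_reg a b X \<longleftrightarrow> (s, t) \<in> S_u (b / a)"
proof -
  define d where "d = a^2 - b^2"
  define x where "x = sqrt X"
  define e where "e = sqrt \<bar>d\<bar>"
  have x: "0 < x" "x^2 = X" and e: "0 < e" "e^2 = \<bar>d\<bar>"
    using ab X by (simp_all add: d_def x_def e_def)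
  have u: "1 - (b / a)^2 = d / a^2"
    using a by (simp add: d_def field_simps)
  then have sgn: "(1 - (b / a)^2) / \<bar>1 - (b / a)^2\<bar> = d / \<bar>d\<bar>"
    using a by simp
  have sqrt_u: "sqrt \<bar>1 - (b / a)^2\<bar> = e / a"
    using u a by (simp add: e_def real_sqrt_divide)
  have Q1: "Q1 a b (x * s) (x / e * t) = - X * p_u (b / a) s t"
    unfolding Q1_def p_u_def sgn sqrt_u d_def[symmetric] using x e a
    by (simp add: field_simps power2_eq_square)
  have Q2: "Q2 a b (x * s) (x / e * t) = - X * q_u (b / a) s t"
    unfolding Q2_def q_u_def sgn d_def[symmetric] using x e
    by (simp add: field_simps power2_eq_square)
  have Q3: "Q3 a b (x * s) (x / e * t) = - (a * X) * r_u (b / a) s t"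
    unfolding Q3_def r_u_def sgn sqrt_u unfolding u d_def[symmetric] using x e a
    by (simp add: field_simps power2_eq_square)
  have "0 < x / e * t \<longleftrightarrow> 0 < t"
    using x e by (simp add: zero_less_mult_iff zero_less_divide_iff)
  moreover have "0 < a * X"
    using a X by simp
  ultimately have "(x * s, x / e * t) \<in> R_reg a b X \<longleftrightarrow> (s, t) \<in> S_u (b / a)"
    unfolding R_reg_def S_u_def mem_Collect_eq prod.case Q1 Q2 Q3
    using X by (auto simp: mult_less_0_iff zero_less_mult_iff mult_le_cancel_left1)
  then show ?thesis
    by (simp add: x_def e_def d_def)
qed

lemma R_reg_borel: "R_reg a b X \<in> sets borel"
  unfolding R_reg_def Q1_def Q2_def Q3_def split_beta' by measurable

lemma emeasure_R_reg'_eq_R_reg: "emeasure lborel (R_reg' a b X) = emeasure lborel (R_reg a b X)"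
proof -
  define line where "line c = {x :: real \<times> real. fst x = c * snd x}" for c
  have "R_reg' a b X = R_reg a b X - (line 0 \<union> line a \<union> line ((a^2 - b^2) / (2 * a)))"
    by (auto simp: R_reg'_def R_reg_def line_def divide_eq_eq)
  moreover have "line 0 \<union> line a \<union> line ((a^2 - b^2) / (2 * a)) \<in> null_sets lborel"
    unfolding line_def by (intro null_sets.Un null_sets_lborel_line)
  ultimately show ?thesis
    using R_reg_borel by (simp add: emeasure_Diff_null_set)
qed

lemma emeasure_R_reg:
  assumes "0 < a" "a^2 \<noteq> b^2" "0 < X"
  shows "emeasure lborel (R_reg a b X)
    = ennreal (X / sqrt \<bar>a^2 - b^2\<bar>) * emeasure lborel (S_u (b / a))"
proof -
  define e where "e = sqrt \<bar>a^2 - b^2\<bar>"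
  have e: "0 < e"
    using assms(2) by (simp add: e_def)
  have "(\<lambda>(s, t). (sqrt X * s, sqrt X / e * t)) -` R_reg a b X = S_u (b / a)"
    using R_reg_scaled_iff[OF assms] by (auto simp: e_def)
  moreover have "\<bar>sqrt X\<bar> * \<bar>sqrt X / e\<bar> = X / e"
    using assms(3) e by simp
  ultimately show ?thesis
    using emeasure_lborel_pair_scale[OF R_reg_borel, where \<alpha> = "sqrt X" and \<beta> = "sqrt X / e"] assms(3) e
    by (simp add: e_def)
qed

lemma R_reg_subset:
  assumes "0 < a" "a^2 \<noteq> b^2" "0 < X"
  shows "R_reg a b X \<subseteq> {- 2 * sqrt X .. 2 * sqrt X} \<times> {0 <.. 2 * sqrt (X / \<bar>a^2 - b^2\<bar>)}"
proof clarify
  fix s t assume st: "(s, t) \<in> R_reg a b X"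
  define e where "e = sqrt \<bar>a^2 - b^2\<bar>"
  have e: "0 < e"
    using assms(2) by (simp add: e_def)
  have "(s / sqrt X, e / sqrt X * t) \<in> S_u (b / a)"
    using R_reg_scaled_iff[OF assms, of "s / sqrt X" "e / sqrt X * t"] st assms(3) e
    by (simp add: e_def)
  moreover have "(b / a)^2 \<noteq> 1"
    using assms(1,2) by (simp add: power_divide)
  ultimately have "\<bar>s / sqrt X\<bar> \<le> 2" "0 < e / sqrt X * t" "e / sqrt X * t \<le> 2"
    using S_u_subset by (fastforce simp: abs_le_iff)+
  then show "s \<in> {- 2 * sqrt X .. 2 * sqrt X} \<and> t \<in> {0 <.. 2 * sqrt (X / \<bar>a^2 - b^2\<bar>)}"
    using assms(3) e
    by (simp add: e_def[symmetric] real_sqrt_divide abs_le_iff field_simps zero_less_mult_iff)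
qed

lemma coprime_squares_neq:
  fixes a b :: int
  assumes "0 < a" "0 < b" "coprime a b" "a * b \<noteq> 1"
  shows "real_of_int a ^ 2 \<noteq> real_of_int b ^ 2"
proof
  assume "real_of_int a ^ 2 = real_of_int b ^ 2"
  then have "a = b"
    using assms(1,2) by (simp add: power2_eq_iff_nonneg)
  then show False
    using assms by simp
qed

theorem lemma6p2:
  shows "(\<forall>(a::int) (b::int) (X::real). a > 0 \<and> b > 0 \<and> coprime a b \<and> a * b \<noteq> 1 \<and> X > 0 \<longrightarrow>
            emeasure lborel (R_reg' (real_of_int a) (real_of_int b) X)
              = emeasure lborel (R_reg (real_of_int a) (real_of_int b) X)
          \<and> emeasure lborel (R_reg (real_of_int a) (real_of_int b) X)
              = ennreal (X / sqrt \<bar>(real_of_int a)^2 - (real_of_int b)^2\<bar>)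
                * emeasure lborel (S_u (real_of_int b / real_of_int a)))
       \<and> (\<exists>c::real. c > 0 \<and>
            (\<forall>(a::int) (b::int) (X::real). a > 0 \<and> b > 0 \<and> coprime a b \<and> a * b \<noteq> 1 \<and> X > 0 \<longrightarrow>
               R_reg (real_of_int a) (real_of_int b) X
                 \<subseteq> {- c * sqrt X .. c * sqrt X}
                    \<times> {0 <.. c * sqrt (X / \<bar>(real_of_int a)^2 - (real_of_int b)^2\<bar>)})
          \<and> (\<forall>u::real. u > 0 \<and> u \<noteq> 1 \<longrightarrow> S_u u \<subseteq> {- c .. c} \<times> {0 <.. c}))"
proof -
  have "S_u u \<subseteq> {- 2 .. 2} \<times> {0 <.. 2}" if "0 < u" "u \<noteq> 1" for u :: real
    using that by (intro S_u_subset) (simp add: power2_eq_1_iff)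
  then show ?thesis
    using coprime_squares_neq emeasure_R_reg'_eq_R_reg emeasure_R_reg R_reg_subset
    by (intro conjI exI[of _ "2::real"]) auto
qed

end
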